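(* Let $M^Q(a|x)$ and $N^{Q'}(b|y)$ be any two simple PMDs, possibly on different Hilbert spaces $\mathcal{H}^Q$, $\mathcal{H}^{Q'}$ and with arbitrary finite program and outcome sets. Then both $M^Q(a|x)\succeq N^{Q'}(b|y)$ and $N^{Q'}(b|y)\succeq M^Q(a|x)$ hold.
   Context: All Hilbert spaces are finite-dimensional and all alphabets are finite. A PMD on $\mathcal{H}^Q$ with program set $\mathcal{X}$ and outcome set $\mathcal{A}$ is a family $\{M^Q(a|x)\}$ of operators on $\mathcal{H}^Q$ with $M^Q(a|x)\ge0$ and $\sum_a M^Q(a|x)=\mathbb{1}^Q$ for every $x$. A PMD is simple (i.e. a compatible family of POVMs) if there exist a POVM $\{\tilde M^Q(i)\}_{i\in\mathcal{I}}$ on $\mathcal{H}^Q$ and a conditional probability distribution $p(a|i,x)$ with $M^Q(a|x)=\sum_i p(a|i,x)\tilde M^Q(i)$ for all $a,x$. $M^Q(a|x)\succeq N^{Q'}(b|y)$ means that there exist a probability distribution $\mu(r)$, for each $r$ a quantum instrument $\{\mathcal{E}^{Q'\to Q}_{i|r}\}_i$, and conditional probability distributions $p(x|i,y,r)$, $q(b|a,x,i,y,r)$ such that for all $b,y$ \[N^{Q'}(b|y)=\sum_r\mu(r)\sum_{i,x,a}q(b|a,x,i,y,r)\,p(x|i,y,r)\,(\mathcal{E}^{Q'\to Q}_{i|r})^\dagger[M^Q(a|x)],\] with $\mathcal{E}^\dagger$ the adjoint (trace-dual) map. *)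

theory Defs
  imports "Jordan_Normal_Form.Matrix" "Jordan_Normal_Form.Conjugate"
begin

(* Operators on a d-dimensional Hilbert space H = C^d are complex d x d matrices. *)

(* positive semidefinite operator: <v, A v> >= 0 for all v (complex order: real and nonnegative) *)
definition psd :: "nat \<Rightarrow> complex mat \<Rightarrow> bool" where
  "psd d A \<longleftrightarrow> A \<in> carrier_mat d d \<and> (\<forall>v \<in> carrier_vec d. 0 \<le> (A *\<^sub>v v) \<bullet>c v)"

definition mat_sum :: "nat \<Rightarrow> 'i set \<Rightarrow> ('i \<Rightarrow> complex mat) \<Rightarrow> complex mat" where
  "mat_sum d S f = mat d d (\<lambda>ij. \<Sum>s\<in>S. f s $$ ij)"

definition mtrace :: "complex mat \<Rightarrow> complex" where
  "mtrace A = (\<Sum>i<dim_row A. A $$ (i, i))"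

definition is_distr :: "'s set \<Rightarrow> ('s \<Rightarrow> real) \<Rightarrow> bool" where
  "is_distr S \<mu> \<longleftrightarrow> finite S \<and> (\<forall>s\<in>S. 0 \<le> \<mu> s) \<and> (\<Sum>s\<in>S. \<mu> s) = 1"

definition povm :: "nat \<Rightarrow> 'i set \<Rightarrow> ('i \<Rightarrow> complex mat) \<Rightarrow> bool" where
  "povm d I F \<longleftrightarrow> finite I \<and> (\<forall>i\<in>I. psd d (F i)) \<and> mat_sum d I F = 1\<^sub>m d"

definition pmd :: "nat \<Rightarrow> 'a set \<Rightarrow> 'x set \<Rightarrow> ('a \<Rightarrow> 'x \<Rightarrow> complex mat) \<Rightarrow> bool" where
  "pmd d A X M \<longleftrightarrow> finite A \<and> finite X \<and> X \<noteq> {} \<and> (\<forall>x\<in>X. povm d A (\<lambda>a. M a x))"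

definition simple_pmd :: "nat \<Rightarrow> 'a set \<Rightarrow> 'x set \<Rightarrow> ('a \<Rightarrow> 'x \<Rightarrow> complex mat) \<Rightarrow> bool" where
  "simple_pmd d A X M \<longleftrightarrow>
     (\<exists>(I :: nat set) Mt p. povm d I Mt \<and>
        (\<forall>i\<in>I. \<forall>x\<in>X. is_distr A (\<lambda>a. p a i x)) \<and>
        (\<forall>a\<in>A. \<forall>x\<in>X. M a x = mat_sum d I (\<lambda>i. complex_of_real (p a i x) \<cdot>\<^sub>m Mt i)))"

definition lin_map :: "nat \<Rightarrow> nat \<Rightarrow> (complex mat \<Rightarrow> complex mat) \<Rightarrow> bool" where
  "lin_map d1 d2 E \<longleftrightarrow>
     (\<forall>\<rho> \<in> carrier_mat d1 d1. E \<rho> \<in> carrier_mat d2 d2) \<and>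
     (\<forall>\<rho> \<in> carrier_mat d1 d1. \<forall>\<sigma> \<in> carrier_mat d1 d1. E (\<rho> + \<sigma>) = E \<rho> + E \<sigma>) \<and>
     (\<forall>c. \<forall>\<rho> \<in> carrier_mat d1 d1. E (c \<cdot>\<^sub>m \<rho>) = c \<cdot>\<^sub>m E \<rho>)"

(* (id_n \<otimes> E)(Y) for Y an operator on C^n \<otimes> C^d1, written blockwise *)
definition ampl :: "nat \<Rightarrow> nat \<Rightarrow> nat \<Rightarrow> (complex mat \<Rightarrow> complex mat) \<Rightarrow> complex mat \<Rightarrow> complex mat" where
  "ampl n d1 d2 E Y = mat (n * d2) (n * d2) (\<lambda>(r, c).
      E (mat d1 d1 (\<lambda>(k, l). Y $$ ((r div d2) * d1 + k, (c div d2) * d1 + l))) $$ (r mod d2, c mod d2))"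

definition cp_map :: "nat \<Rightarrow> nat \<Rightarrow> (complex mat \<Rightarrow> complex mat) \<Rightarrow> bool" where
  "cp_map d1 d2 E \<longleftrightarrow> lin_map d1 d2 E \<and>
     (\<forall>n Y. psd (n * d1) Y \<longrightarrow> psd (n * d2) (ampl n d1 d2 E Y))"

definition instrument :: "nat \<Rightarrow> nat \<Rightarrow> 'i set \<Rightarrow> ('i \<Rightarrow> complex mat \<Rightarrow> complex mat) \<Rightarrow> bool" where
  "instrument d1 d2 I E \<longleftrightarrow> finite I \<and> (\<forall>i\<in>I. cp_map d1 d2 (E i)) \<and>
     (\<forall>\<rho> \<in> carrier_mat d1 d1. mtrace (mat_sum d2 I (\<lambda>i. E i \<rho>)) = mtrace \<rho>)"

(* trace-dual (Heisenberg picture) of E : ops(C^d1) -> ops(C^d2), written out in the matrix-unit basis: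
   mtrace (\<rho> * dual E A) = mtrace (E \<rho> * A) *)
definition dual_map :: "nat \<Rightarrow> (complex mat \<Rightarrow> complex mat) \<Rightarrow> complex mat \<Rightarrow> complex mat" where
  "dual_map d1 E A = mat d1 d1 (\<lambda>(k, l).
      mtrace (E (mat d1 d1 (\<lambda>(i, j). if i = l \<and> j = k then 1 else 0)) * A))"

(* M \<succeq> N : N (on C^dN, outcomes B, programs Y) is simulable from M (on C^dM, outcomes A, programs X) *)
definition simulates ::
  "nat \<Rightarrow> 'a set \<Rightarrow> 'x set \<Rightarrow> ('a \<Rightarrow> 'x \<Rightarrow> complex mat) \<Rightarrow>
   nat \<Rightarrow> 'b set \<Rightarrow> 'y set \<Rightarrow> ('b \<Rightarrow> 'y \<Rightarrow> complex mat) \<Rightarrow> bool" where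
  "simulates dM A X M dN B Y N \<longleftrightarrow>
     (\<exists>(R :: nat set) \<mu> (I :: nat \<Rightarrow> nat set) E p q.
        is_distr R \<mu> \<and>
        (\<forall>r\<in>R. instrument dN dM (I r) (E r) \<and>
           (\<forall>i\<in>I r. \<forall>y\<in>Y. is_distr X (\<lambda>x. p x i y r) \<and>
              (\<forall>x\<in>X. \<forall>a\<in>A. is_distr B (\<lambda>b. q b a x i y r)))) \<and>
        (\<forall>b\<in>B. \<forall>y\<in>Y. N b y =
           mat_sum dN R (\<lambda>r. complex_of_real (\<mu> r) \<cdot>\<^sub>m
             mat_sum dN (I r) (\<lambda>i. mat_sum dN X (\<lambda>x. mat_sum dN A (\<lambda>a.
               complex_of_real (q b a x i y r * p x i y r) \<cdot>\<^sub>m dual_map dN (E r i) (M a x)))))))"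

end

theory Submission
  imports Defs
begin

text \<open>Any PMD \<open>M\<close> on a space of positive dimension can simulate a simple PMD \<open>N\<close>, whose
operators are \<open>N(b|y) = \<Sum>\<^sub>i p(b|i,y) F\<^sub>i\<close> for a POVM \<open>F\<close>: measure \<open>F\<close> with the
instrument \<open>\<rho> \<mapsto> tr(\<rho> F\<^sub>i) |0\<rangle>\<langle>0|\<close>, feed \<open>|0\<rangle>\<langle>0|\<close> to a fixed program
\<open>x\<^sub>0\<close> of \<open>M\<close>, ignore its outcome (which is harmless because \<open>\<Sum>\<^sub>a M(a|x\<^sub>0) = 1\<close>) and
output \<open>b\<close> with probability \<open>p(b|i,y)\<close>. Applying this in both directions gives the theorem.
The only non-trivial point is complete positivity of the measure-and-prepare maps; it follows
from a Gram decomposition \<open>F = \<Sum>\<^sub>j u\<^sub>j u\<^sub>j\<^sup>*\<close> of the positive semidefinite \<open>F\<close>, obtained by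
induction on the dimension through Schur complements.\<close>

definition quad_form :: "nat \<Rightarrow> (nat \<Rightarrow> nat \<Rightarrow> complex) \<Rightarrow> (nat \<Rightarrow> complex) \<Rightarrow> complex" where
  "quad_form d P v = (\<Sum>i<d. \<Sum>j<d. P i j * v j * cnj (v i))"

definition psd_form :: "nat \<Rightarrow> (nat \<Rightarrow> nat \<Rightarrow> complex) \<Rightarrow> bool" where
  "psd_form d P \<longleftrightarrow> (\<forall>v. 0 \<le> quad_form d P v)"

lemma quad_form_point:
  assumes "i < d"
  shows "quad_form d P (\<lambda>k. if k = i then \<alpha> else 0) = P i i * \<alpha> * cnj \<alpha>"
proof -
  have e: "P a b * (if b = i then \<alpha> else 0) * cnj (if a = i then \<alpha> else 0)
      = (if b = i then (if a = i then P i i * \<alpha> * cnj \<alpha> else 0) else 0)" for a b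
    by auto
  show ?thesis
    unfolding quad_form_def e using assms by simp
qed

lemma quad_form_two_points:
  assumes "i < d" "j < d" "i \<noteq> j"
  shows "quad_form d P (\<lambda>k. (if k = i then \<alpha> else 0) + (if k = j then \<beta> else 0)) =
    P i i * \<alpha> * cnj \<alpha> + P i j * \<beta> * cnj \<alpha> + P j i * \<alpha> * cnj \<beta> + P j j * \<beta> * cnj \<beta>"
proof -
  have e: "P a b * ((if b = i then \<alpha> else 0) + (if b = j then \<beta> else 0))
          * cnj ((if a = i then \<alpha> else 0) + (if a = j then \<beta> else 0))
     = (if b = i then (if a = i then P i i * \<alpha> * cnj \<alpha> else 0) else 0)
     + (if b = j then (if a = i then P i j * \<beta> * cnj \<alpha> else 0) else 0)
     + (if b = i then (if a = j then P j i * \<alpha> * cnj \<beta> else 0) else 0)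
     + (if b = j then (if a = j then P j j * \<beta> * cnj \<beta> else 0) else 0)" for a b
    using assms by (auto simp: algebra_simps)
  show ?thesis
    unfolding quad_form_def e using assms by (simp add: sum.distrib)
qed

lemma psd_form_diag_nonneg:
  assumes "psd_form d P" "i < d"
  shows "0 \<le> P i i"
proof -
  have "0 \<le> quad_form d P (\<lambda>k. if k = i then 1 else 0)"
    using assms(1) unfolding psd_form_def ..
  then show ?thesis
    using quad_form_point[OF assms(2), of P 1] by simp
qed

lemma psd_form_diag_real:
  assumes "psd_form d P" "i < d"
  shows "P i i = complex_of_real (Re (P i i))"
  using psd_form_diag_nonneg[OF assms] by (simp add: less_eq_complex_def complex_eq_iff)

lemma psd_form_hermitian:
  assumes P: "psd_form d P" and "i < d" "j < d"
  shows "P j i = cnj (P i j)"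
proof (cases "i = j")
  case True
  then show ?thesis
    using psd_form_diag_nonneg[OF P \<open>i < d\<close>] by (simp add: less_eq_complex_def complex_eq_iff)
next
  case False
  have "0 \<le> quad_form d P (\<lambda>k. (if k = i then 1 else 0) + (if k = j then 1 else 0))"
    and "0 \<le> quad_form d P (\<lambda>k. (if k = i then 1 else 0) + (if k = j then \<i> else 0))"
    using P unfolding psd_form_def by blast+
  then have "0 \<le> P i i + P i j + P j i + P j j" "0 \<le> P i i + P i j * \<i> - P j i * \<i> + P j j"
    using quad_form_two_points[OF assms(2,3) False, of P 1 1] quad_form_two_points[OF assms(2,3) False, of P 1 \<i>]
    by (simp_all add: mult.assoc)
  moreover have "0 \<le> P i i" "0 \<le> P j j"
    using psd_form_diag_nonneg P assms by auto
  ultimately show ?thesis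
    by (auto simp: less_eq_complex_def complex_eq_iff)
qed

lemma quad_form_Suc_upd:
  "quad_form (Suc d) P (v(d := t)) = quad_form d P v
     + t * (\<Sum>i<d. P i d * cnj (v i)) + cnj t * (\<Sum>j<d. P d j * v j) + P d d * t * cnj t"
proof -
  have inner: "(\<Sum>j<d. P i j * (v(d := t)) j * cnj ((v(d := t)) i)) = (\<Sum>j<d. P i j * v j * cnj (v i))"
    if "i < d" for i
    using that by (intro sum.cong) auto
  have last_row: "(\<Sum>j<d. P d j * (v(d := t)) j * cnj t) = cnj t * (\<Sum>j<d. P d j * v j)"
    by (auto simp: sum_distrib_left algebra_simps intro!: sum.cong)
  have last_col: "(\<Sum>i<d. P i d * t * cnj ((v(d := t)) i)) = t * (\<Sum>i<d. P i d * cnj (v i))"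
    by (auto simp: sum_distrib_left algebra_simps intro!: sum.cong)
  have "quad_form (Suc d) P (v(d := t))
      = (\<Sum>i<d. (\<Sum>j<d. P i j * (v(d := t)) j * cnj ((v(d := t)) i)) + P i d * t * cnj ((v(d := t)) i))
        + ((\<Sum>j<d. P d j * (v(d := t)) j * cnj t) + P d d * t * cnj t)"
    unfolding quad_form_def by (simp add: sum.lessThan_Suc)
  also have "\<dots> = quad_form d P v + t * (\<Sum>i<d. P i d * cnj (v i))
      + (cnj t * (\<Sum>j<d. P d j * v j) + P d d * t * cnj t)"
    unfolding last_row sum.distrib last_col[symmetric] quad_form_def by (simp add: inner)
  finally show ?thesis
    by (simp only: add.assoc)
qed

lemma psd_form_SucD:
  assumes "psd_form (Suc d) P"
  shows "psd_form d P"
  unfolding psd_form_def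
proof
  fix v
  have "0 \<le> quad_form (Suc d) P (v(d := 0))"
    using assms unfolding psd_form_def ..
  then show "0 \<le> quad_form d P v"
    by (simp add: quad_form_Suc_upd)
qed

lemma psd_form_zero_diag:
  assumes P: "psd_form d P" and ij: "i < d" "j < d" and zero: "P j j = 0"
  shows "P i j = 0"
proof (cases "i = j")
  case True
  then show ?thesis using zero by simp
next
  case False
  define z where "z = P i j"
  define p where "p = Re (P i i)"
  define c where "c = 1 / (p + 1)"
  have Pii: "P i i = complex_of_real p"
    using psd_form_diag_real[OF P ij(1)] unfolding p_def .
  have p0: "0 \<le> p"
    using psd_form_diag_nonneg[OF P ij(1)] unfolding p_def by (simp add: less_eq_complex_def)
  have c0: "0 < c" and pc: "p * c < 1"
    using p0 unfolding c_def by (auto simp: field_simps)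
  have herm: "P j i = cnj z"
    using psd_form_hermitian[OF P ij] unfolding z_def .
  \<comment> \<open>on \<open>e\<^sub>j - c z e\<^sub>i\<close> the form is \<open>c |z|\<^sup>2 (p c - 2)\<close>, negative unless \<open>z = 0\<close>\<close>
  have "0 \<le> quad_form d P (\<lambda>k. (if k = i then - complex_of_real c * z else 0) + (if k = j then 1 else 0))"
    using P unfolding psd_form_def ..
  then have "0 \<le> Re (P i i * (- complex_of_real c * z) * cnj (- complex_of_real c * z)
      + P i j * cnj (- complex_of_real c * z) + P j i * (- complex_of_real c * z) + P j j)"
    by (simp add: quad_form_two_points[OF ij False] less_eq_complex_def)
  also have "\<dots> = c * ((Re z)\<^sup>2 + (Im z)\<^sup>2) * (p * c - 2)"
    unfolding Pii herm zero z_def[symmetric] by (simp add: algebra_simps power2_eq_square)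
  also have "\<dots> = (c * (p * c - 2)) * ((Re z)\<^sup>2 + (Im z)\<^sup>2)"
    by (simp only: ac_simps)
  finally have "0 \<le> (c * (p * c - 2)) * ((Re z)\<^sup>2 + (Im z)\<^sup>2)" .
  moreover have "c * (p * c - 2) < 0"
    using c0 pc by (simp add: mult_pos_neg)
  ultimately have "(Re z)\<^sup>2 + (Im z)\<^sup>2 \<le> 0"
    using mult_le_cancel_left_neg[of "c * (p * c - 2)" 0 "(Re z)\<^sup>2 + (Im z)\<^sup>2"] by (simp only: mult_zero_right)
  then have "Re z = 0" "Im z = 0"
    by (simp_all add: sum_power2_le_zero_iff)
  then show ?thesis
    unfolding z_def[symmetric] by (simp add: complex_eq_iff)
qed

text \<open>For \<open>P d d = 0\<close> the division yields \<open>0\<close> and the complement is just the restriction of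
  \<open>P\<close>, so the Gram induction below needs no case split on the pivot.\<close>

lemma psd_form_schur_complement:
  assumes P: "psd_form (Suc d) P"
  shows "psd_form d (\<lambda>i j. P i j - P i d * P d j / P d d)"
proof (cases "P d d = 0")
  case True
  then show ?thesis using psd_form_SucD[OF P] by simp
next
  case False
  define a where "a = P d d"
  have a0: "a \<noteq> 0"
    using False unfolding a_def .
  have a_real: "cnj a = a"
    using psd_form_hermitian[OF P, of d d] unfolding a_def by simp
  show ?thesis
    unfolding psd_form_def
  proof
    fix v
    define \<beta> where "\<beta> = (\<Sum>j<d. P d j * v j)"
    have cnj_\<beta>: "(\<Sum>i<d. P i d * cnj (v i)) = cnj \<beta>"
      unfolding \<beta>_def cnj_sum using psd_form_hermitian[OF P, of _ d] by (intro sum.cong) auto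
    have "quad_form d (\<lambda>i j. P i j - P i d * P d j / P d d) v
        = quad_form d P v - (\<Sum>i<d. \<Sum>j<d. P i d * cnj (v i) * (P d j * v j) / a)"
      unfolding quad_form_def a_def by (simp add: algebra_simps sum_subtractf)
    also have "\<dots> = quad_form d P v - (\<Sum>i<d. P i d * cnj (v i)) * (\<Sum>j<d. P d j * v j) / a"
      by (simp add: sum_product sum_divide_distrib)
    also have "\<dots> = quad_form d P v - cnj \<beta> * \<beta> / a"
      by (simp only: cnj_\<beta> flip: \<beta>_def)
    also have "\<dots> = quad_form d P v + (- \<beta> / a) * cnj \<beta> + cnj (- \<beta> / a) * \<beta>
        + a * (- \<beta> / a) * cnj (- \<beta> / a)"
      using a0 a_real by (simp add: field_simps)
    also have "\<dots> = quad_form (Suc d) P (v(d := - \<beta> / a))"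
      by (simp only: quad_form_Suc_upd cnj_\<beta> flip: \<beta>_def a_def)
    finally show "0 \<le> quad_form d (\<lambda>i j. P i j - P i d * P d j / P d d) v"
      using P unfolding psd_form_def by simp
  qed
qed

lemma psd_form_border:
  assumes P: "psd_form (Suc d) P" and ij: "i < Suc d" "j < Suc d" "i = d \<or> j = d"
  shows "P i j = P i d * P d j / P d d"
proof (cases "P d d = 0")
  case True
  have col: "P k d = 0" if "k < Suc d" for k
    using psd_form_zero_diag[OF P that _ True] by simp
  have "P i j = 0"
  proof (cases "j = d")
    case True
    then show ?thesis using col ij(1) by simp
  next
    case False
    then have "i = d" using ij(3) by simp
    then show ?thesis using psd_form_hermitian[OF P ij(2), of d] col[OF ij(2)] by simp
  qed
  then show ?thesis using True by simp
next
  case False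
  with ij show ?thesis by auto
qed

lemma psd_form_pivot_split:
  assumes P: "psd_form (Suc d) P" and ij: "i < Suc d" "j < Suc d"
  defines "w \<equiv> \<lambda>k. P k d / complex_of_real (sqrt (Re (P d d)))"
  shows "P i j = (if i < d \<and> j < d then P i j - P i d * P d j / P d d else 0) + w i * cnj (w j)"
proof -
  define s where "s = complex_of_real (sqrt (Re (P d d)))"
  have w_s: "w = (\<lambda>k. P k d / s)"
    unfolding w_def s_def ..
  have "0 \<le> Re (P d d)"
    using psd_form_diag_nonneg[OF P, of d] by (simp add: less_eq_complex_def)
  then have ss: "s * cnj s = P d d"
    unfolding s_def by (simp flip: of_real_mult psd_form_diag_real[OF P, of d])
  have "P d j = cnj (P j d)"
    using psd_form_hermitian[OF P ij(2) lessI] .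
  then have w: "w i * cnj (w j) = P i d * P d j / P d d"
    unfolding w_s complex_cnj_divide ss[symmetric] by simp
  show ?thesis
  proof (cases "i < d \<and> j < d")
    case True
    then show ?thesis by (simp add: w)
  next
    case False
    with ij have "P i j = P i d * P d j / P d d"
      by (intro psd_form_border[OF P ij]) auto
    with False show ?thesis
      by (simp add: w)
  qed
qed

lemma psd_form_gram:
  assumes "psd_form d P"
  shows "\<exists>(m::nat) u. \<forall>i<d. \<forall>j<d. P i j = (\<Sum>k<m. u k i * cnj (u k j))"
  using assms
proof (induction d arbitrary: P)
  case 0
  then show ?case by auto
next
  case (Suc d P)
  have "\<exists>(m::nat) u. \<forall>i<d. \<forall>j<d. P i j - P i d * P d j / P d d = (\<Sum>k<m. u k i * cnj (u k j))"
    by (rule Suc.IH[OF psd_form_schur_complement[OF Suc.prems]])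
  then obtain m :: nat and u where u: "\<forall>i<d. \<forall>j<d. P i j - P i d * P d j / P d d = (\<Sum>k<m. u k i * cnj (u k j))"
    by blast
  define w where "w k = P k d / complex_of_real (sqrt (Re (P d d)))" for k
  define u' where "u' k i = (if k < m then (if i = d then 0 else u k i) else w i)" for k i
  have "P i j = (\<Sum>k<Suc m. u' k i * cnj (u' k j))" if ij: "i < Suc d" "j < Suc d" for i j
  proof -
    have "(\<Sum>k<m. u' k i * cnj (u' k j)) = (if i < d \<and> j < d then P i j - P i d * P d j / P d d else 0)"
      using u ij by (auto simp: u'_def)
    then show ?thesis
      using psd_form_pivot_split[OF Suc.prems ij] by (simp add: u'_def w_def)
  qed
  then show ?case
    by (intro exI[of _ "Suc m"] exI[of _ u']) blast
qed

lemma quad_form_cong: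
  assumes "\<And>i. i < d \<Longrightarrow> v i = w i"
  shows "quad_form d P v = quad_form d P w"
  unfolding quad_form_def using assms by simp

lemma sum_lessThan_mult_split:
  fixes f :: "nat \<Rightarrow> 'a :: comm_monoid_add"
  shows "(\<Sum>r<n * d. f r) = (\<Sum>R<n. \<Sum>s<d. f (R * d + s))"
proof -
  have "sum f {R * d..<R * d + d} = (\<Sum>s<d. f (R * d + s))" for R
    using sum.shift_bounds_nat_ivl[of f 0 "R * d" d] by (simp add: add.commute lessThan_atLeast0)
  then show ?thesis
    by (simp flip: sum.nat_group)
qed

lemma block_index_bound:
  fixes R s n d :: nat
  assumes "R < n" "s < d"
  shows "R * d + s < n * d"
proof -
  have "R * d + s < (R + 1) * d" using assms by simp
  also have "\<dots> \<le> n * d" using assms by (intro mult_right_mono) auto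
  finally show ?thesis .
qed

lemma quad_form_blocks:
  "quad_form (n * d) P v =
    (\<Sum>R<n. \<Sum>k<d. \<Sum>C<n. \<Sum>l<d. P (R * d + k) (C * d + l) * v (C * d + l) * cnj (v (R * d + k)))"
  unfolding quad_form_def by (simp add: sum_lessThan_mult_split)

lemma quad_form_mult_mat_vec:
  assumes "A \<in> carrier_mat d d" "v \<in> carrier_vec d"
  shows "(A *\<^sub>v v) \<bullet>c v = quad_form d (\<lambda>i j. A $$ (i, j)) (\<lambda>i. v $ i)"
  using assms by (simp add: quad_form_def scalar_prod_def mult_mat_vec_def sum_distrib_right lessThan_atLeast0)

lemma psd_iff_psd_form:
  "psd d A \<longleftrightarrow> A \<in> carrier_mat d d \<and> psd_form d (\<lambda>i j. A $$ (i, j))"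
proof
  assume A: "psd d A"
  have "0 \<le> quad_form d (\<lambda>i j. A $$ (i, j)) v" for v
  proof -
    have "0 \<le> (A *\<^sub>v vec d v) \<bullet>c vec d v"
      using A by (simp add: psd_def)
    also have "\<dots> = quad_form d (\<lambda>i j. A $$ (i, j)) (\<lambda>i. vec d v $ i)"
      using A by (simp add: psd_def quad_form_mult_mat_vec)
    also have "\<dots> = quad_form d (\<lambda>i j. A $$ (i, j)) v"
      by (rule quad_form_cong) simp
    finally show ?thesis .
  qed
  with A show "A \<in> carrier_mat d d \<and> psd_form d (\<lambda>i j. A $$ (i, j))"
    by (simp add: psd_def psd_form_def)
next
  assume "A \<in> carrier_mat d d \<and> psd_form d (\<lambda>i j. A $$ (i, j))"
  then show "psd d A"
    by (auto simp: psd_def psd_form_def quad_form_mult_mat_vec)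
qed

lemma mat_sum_index [simp]:
  "i < d \<Longrightarrow> j < d \<Longrightarrow> mat_sum d S f $$ (i, j) = (\<Sum>s\<in>S. f s $$ (i, j))"
  by (simp add: mat_sum_def)

lemma mat_sum_carrier [simp]:
  "mat_sum d S f \<in> carrier_mat d d" "dim_row (mat_sum d S f) = d" "dim_col (mat_sum d S f) = d"
  by (auto simp: mat_sum_def)

lemma mat_sum_cong:
  "(\<And>s. s \<in> S \<Longrightarrow> f s = g s) \<Longrightarrow> mat_sum d S f = mat_sum d S g"
  by (simp add: mat_sum_def)

lemma mat_sum_singleton:
  "f r \<in> carrier_mat d d \<Longrightarrow> mat_sum d {r} f = f r"
  by (auto intro!: eq_matI)

lemma mat_sum_delta:
  assumes "finite S" "s0 \<in> S" "G \<in> carrier_mat d d"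
  shows "mat_sum d S (\<lambda>s. if s = s0 then G else 0\<^sub>m d d) = G"
  using assms by (auto simp: if_distrib[of "\<lambda>A. A $$ _"] cong: if_cong intro!: eq_matI)

lemma mtrace_mult:
  assumes "A \<in> carrier_mat d d" "B \<in> carrier_mat d d"
  shows "mtrace (A * B) = (\<Sum>k<d. \<Sum>l<d. A $$ (k, l) * B $$ (l, k))"
  using assms by (simp add: mtrace_def scalar_prod_def lessThan_atLeast0)

lemma mtrace_add:
  assumes "A \<in> carrier_mat d d" "B \<in> carrier_mat d d"
  shows "mtrace (A + B) = mtrace A + mtrace B"
  using assms by (simp add: mtrace_def sum.distrib)

lemma mtrace_smult:
  assumes "A \<in> carrier_mat d d"
  shows "mtrace (c \<cdot>\<^sub>m A) = c * mtrace A"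
  using assms by (simp add: mtrace_def sum_distrib_left)

lemma mtrace_mult_mat_sum:
  assumes "\<rho> \<in> carrier_mat d d" "\<And>i. i \<in> I \<Longrightarrow> F i \<in> carrier_mat d d"
  shows "mtrace (\<rho> * mat_sum d I F) = (\<Sum>i\<in>I. mtrace (\<rho> * F i))"
proof -
  have "mtrace (\<rho> * mat_sum d I F) = (\<Sum>k<d. \<Sum>l<d. \<Sum>i\<in>I. \<rho> $$ (k, l) * F i $$ (l, k))"
    using assms by (simp add: mtrace_mult[OF _ mat_sum_carrier(1)] sum_distrib_left)
  also have "\<dots> = (\<Sum>k<d. \<Sum>i\<in>I. \<Sum>l<d. \<rho> $$ (k, l) * F i $$ (l, k))"
    by (rule sum.cong[OF refl], rule sum.swap)
  also have "\<dots> = (\<Sum>i\<in>I. \<Sum>k<d. \<Sum>l<d. \<rho> $$ (k, l) * F i $$ (l, k))"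
    by (rule sum.swap)
  also have "\<dots> = (\<Sum>i\<in>I. mtrace (\<rho> * F i))"
    by (rule sum.cong[OF refl]) (simp add: mtrace_mult[OF assms])
  finally show ?thesis .
qed

definition ket0_proj :: "nat \<Rightarrow> complex mat" where
  "ket0_proj d = mat d d (\<lambda>(k, l). if k = 0 \<and> l = 0 then 1 else 0)"

definition measure_prepare :: "complex mat \<Rightarrow> nat \<Rightarrow> complex mat \<Rightarrow> complex mat" where
  "measure_prepare F d \<rho> = mtrace (\<rho> * F) \<cdot>\<^sub>m ket0_proj d"

definition block :: "nat \<Rightarrow> complex mat \<Rightarrow> nat \<Rightarrow> nat \<Rightarrow> complex mat" where
  "block d Y R C = mat d d (\<lambda>(k, l). Y $$ (R * d + k, C * d + l))"

lemma ket0_proj_carrier [simp]: "ket0_proj d \<in> carrier_mat d d"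
  by (simp add: ket0_proj_def)

lemma lin_map_measure_prepare:
  assumes F: "F \<in> carrier_mat dN dN"
  shows "lin_map dN dM (measure_prepare F dM)"
  unfolding lin_map_def
proof (intro conjI ballI allI)
  fix \<rho> :: "complex mat"
  show "measure_prepare F dM \<rho> \<in> carrier_mat dM dM"
    by (simp add: measure_prepare_def)
next
  fix \<rho> \<sigma> :: "complex mat"
  assume \<rho>: "\<rho> \<in> carrier_mat dN dN" and \<sigma>: "\<sigma> \<in> carrier_mat dN dN"
  have "mtrace ((\<rho> + \<sigma>) * F) = mtrace (\<rho> * F) + mtrace (\<sigma> * F)"
    using F \<rho> \<sigma> by (simp add: add_mult_distrib_mat mtrace_add[of _ dN])
  then show "measure_prepare F dM (\<rho> + \<sigma>) = measure_prepare F dM \<rho> + measure_prepare F dM \<sigma>"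
    unfolding measure_prepare_def by (simp add: add_smult_distrib_right_mat[of _ dM dM])
next
  fix c :: complex and \<rho> :: "complex mat"
  assume \<rho>: "\<rho> \<in> carrier_mat dN dN"
  have "mtrace ((c \<cdot>\<^sub>m \<rho>) * F) = c * mtrace (\<rho> * F)"
    using F \<rho> by (simp add: mult_smult_assoc_mat mtrace_smult[of _ dN])
  then show "measure_prepare F dM (c \<cdot>\<^sub>m \<rho>) = c \<cdot>\<^sub>m measure_prepare F dM \<rho>"
    unfolding measure_prepare_def by (auto intro!: eq_matI)
qed

lemma ampl_measure_prepare_index:
  assumes "R < n" "C < n" "s < dM" "t < dM"
  shows "ampl n dN dM (measure_prepare F dM) Y $$ (R * dM + s, C * dM + t)
    = (if s = 0 \<and> t = 0 then mtrace (block dN Y R C * F) else 0)"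
  using assms
  by (simp add: ampl_def measure_prepare_def ket0_proj_def block_def block_index_bound)

lemma quad_form_ampl_measure_prepare:
  assumes "0 < dM"
  shows "quad_form (n * dM) (\<lambda>r c. ampl n dN dM (measure_prepare F dM) Y $$ (r, c)) v
    = (\<Sum>R<n. \<Sum>C<n. mtrace (block dN Y R C * F) * v (C * dM) * cnj (v (R * dM)))"
proof -
  let ?G = "\<lambda>R C. mtrace (block dN Y R C * F) * v (C * dM) * cnj (v (R * dM))"
  have "quad_form (n * dM) (\<lambda>r c. ampl n dN dM (measure_prepare F dM) Y $$ (r, c)) v
      = (\<Sum>R<n. \<Sum>s<dM. \<Sum>C<n. \<Sum>t<dM. if t = 0 then (if s = 0 then ?G R C else 0) else 0)"
    unfolding quad_form_blocks by (intro sum.cong refl) (auto simp: ampl_measure_prepare_index)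
  also have "\<dots> = (\<Sum>R<n. \<Sum>s<dM. \<Sum>C<n. if s = 0 then ?G R C else 0)"
    using assms by simp
  also have "\<dots> = (\<Sum>R<n. \<Sum>C<n. \<Sum>s<dM. if s = 0 then ?G R C else 0)"
    by (rule sum.cong[OF refl], rule sum.swap)
  also have "\<dots> = (\<Sum>R<n. \<Sum>C<n. ?G R C)"
    using assms by simp
  finally show ?thesis .
qed

lemma quad_form_blocks_product:
  "quad_form (n * d) P (\<lambda>a. w (a div d) * x (a mod d))
    = (\<Sum>R<n. \<Sum>C<n. (\<Sum>k<d. \<Sum>l<d. P (R * d + k) (C * d + l) * x l * cnj (x k)) * w C * cnj (w R))"
proof -
  have "quad_form (n * d) P (\<lambda>a. w (a div d) * x (a mod d))
      = (\<Sum>R<n. \<Sum>k<d. \<Sum>C<n. \<Sum>l<d. P (R * d + k) (C * d + l) * x l * cnj (x k) * w C * cnj (w R))"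
    unfolding quad_form_blocks by (intro sum.cong refl) (simp add: algebra_simps)
  also have "\<dots> = (\<Sum>R<n. \<Sum>C<n. \<Sum>k<d. \<Sum>l<d. P (R * d + k) (C * d + l) * x l * cnj (x k) * w C * cnj (w R))"
    by (rule sum.cong[OF refl], rule sum.swap)
  finally show ?thesis
    by (simp add: sum_distrib_right)
qed

lemma psd_mtrace_blocks_nonneg:
  assumes F: "psd d F" and Y: "psd (n * d) Y"
  shows "0 \<le> (\<Sum>R<n. \<Sum>C<n. mtrace (block d Y R C * F) * w C * cnj (w R))"
proof -
  have "\<exists>(m::nat) u. \<forall>i<d. \<forall>j<d. F $$ (i, j) = (\<Sum>k<m. u k i * cnj (u k j))"
    using F by (intro psd_form_gram) (simp add: psd_iff_psd_form)
  then obtain m :: nat and u where u: "\<forall>i<d. \<forall>j<d. F $$ (i, j) = (\<Sum>k<m. u k i * cnj (u k j))"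
    by blast
  define Q where "Q j R C = (\<Sum>k<d. \<Sum>l<d. Y $$ (R * d + k, C * d + l) * u j l * cnj (u j k))" for j R C
  have trace: "mtrace (block d Y R C * F) = (\<Sum>j<m. Q j R C)" for R C
  proof -
    have "mtrace (block d Y R C * F) = (\<Sum>k<d. \<Sum>l<d. \<Sum>j<m. Y $$ (R * d + k, C * d + l) * (u j l * cnj (u j k)))"
      using F by (simp add: mtrace_mult[of _ d] block_def psd_def u sum_distrib_left)
    also have "\<dots> = (\<Sum>k<d. \<Sum>j<m. \<Sum>l<d. Y $$ (R * d + k, C * d + l) * (u j l * cnj (u j k)))"
      by (rule sum.cong[OF refl], rule sum.swap)
    also have "\<dots> = (\<Sum>j<m. \<Sum>k<d. \<Sum>l<d. Y $$ (R * d + k, C * d + l) * (u j l * cnj (u j k)))"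
      by (rule sum.swap)
    finally show ?thesis
      by (simp add: Q_def mult.assoc)
  qed
  have "(\<Sum>R<n. \<Sum>C<n. mtrace (block d Y R C * F) * w C * cnj (w R))
      = (\<Sum>R<n. \<Sum>C<n. \<Sum>j<m. Q j R C * w C * cnj (w R))"
    by (simp add: trace sum_distrib_right)
  also have "\<dots> = (\<Sum>R<n. \<Sum>j<m. \<Sum>C<n. Q j R C * w C * cnj (w R))"
    by (rule sum.cong[OF refl], rule sum.swap)
  also have "\<dots> = (\<Sum>j<m. \<Sum>R<n. \<Sum>C<n. Q j R C * w C * cnj (w R))"
    by (rule sum.swap)
  also have "\<dots> = (\<Sum>j<m. quad_form (n * d) (\<lambda>a b. Y $$ (a, b)) (\<lambda>a. w (a div d) * u j (a mod d)))"
    by (simp add: quad_form_blocks_product Q_def)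
  also have "0 \<le> \<dots>"
    using Y by (intro sum_nonneg) (simp add: psd_iff_psd_form psd_form_def)
  finally show ?thesis .
qed

lemma cp_map_measure_prepare:
  assumes F: "psd dN F" and dM: "0 < dM"
  shows "cp_map dN dM (measure_prepare F dM)"
  unfolding cp_map_def
proof (intro conjI allI impI)
  show "lin_map dN dM (measure_prepare F dM)"
    using F by (intro lin_map_measure_prepare) (simp add: psd_def)
next
  fix n Y
  assume Y: "psd (n * dN) Y"
  have "psd_form (n * dM) (\<lambda>r c. ampl n dN dM (measure_prepare F dM) Y $$ (r, c))"
    unfolding psd_form_def quad_form_ampl_measure_prepare[OF dM]
    by (intro allI psd_mtrace_blocks_nonneg[OF F Y])
  then show "psd (n * dM) (ampl n dN dM (measure_prepare F dM) Y)"
    by (simp add: psd_iff_psd_form ampl_def)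
qed

lemma mtrace_matrix_unit_mult:
  assumes "F \<in> carrier_mat d d" "k < d" "l < d"
  shows "mtrace (mat d d (\<lambda>(i, j). if i = l \<and> j = k then 1 else 0) * F) = F $$ (k, l)"
proof -
  have "(if a = l \<and> b = k then 1 else 0) * F $$ (b, a) = (if b = k then (if a = l then F $$ (k, l) else 0) else 0)"
    for a b
    by simp
  then show ?thesis
    using assms by (simp add: mtrace_mult[of _ d])
qed

lemma mtrace_ket0_proj_mult:
  assumes "K \<in> carrier_mat d d" "0 < d"
  shows "mtrace (ket0_proj d * K) = K $$ (0, 0)"
proof -
  have "(if a = 0 \<and> b = 0 then 1 else 0) * K $$ (b, a) = (if b = 0 then (if a = 0 then K $$ (0, 0) else 0) else 0)"
    for a b
    by simp
  then show ?thesis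
    using assms by (simp add: mtrace_mult[of _ d] ket0_proj_def)
qed

lemma dual_map_measure_prepare:
  assumes F: "F \<in> carrier_mat dN dN" and K: "K \<in> carrier_mat dM dM" and dM: "0 < dM"
  shows "dual_map dN (measure_prepare F dM) K = K $$ (0, 0) \<cdot>\<^sub>m F"
proof (rule eq_matI)
  fix k l
  assume "k < dim_row (K $$ (0, 0) \<cdot>\<^sub>m F)" "l < dim_col (K $$ (0, 0) \<cdot>\<^sub>m F)"
  then have kl: "k < dN" "l < dN"
    using F by auto
  let ?U = "mat dN dN (\<lambda>(i, j). if i = l \<and> j = k then 1 else 0) :: complex mat"
  have "mtrace (measure_prepare F dM ?U * K) = mtrace (?U * F) * mtrace (ket0_proj dM * K)"
    using K by (simp add: measure_prepare_def mult_smult_assoc_mat[of _ dM dM]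
        mtrace_smult[OF mult_carrier_mat[OF ket0_proj_carrier K]])
  also have "\<dots> = F $$ (k, l) * K $$ (0, 0)"
    using F K kl dM by (simp add: mtrace_matrix_unit_mult mtrace_ket0_proj_mult)
  finally show "dual_map dN (measure_prepare F dM) K $$ (k, l) = (K $$ (0, 0) \<cdot>\<^sub>m F) $$ (k, l)"
    using F kl by (simp add: dual_map_def)
qed (use F in \<open>auto simp: dual_map_def\<close>)

lemma mtrace_mat_sum_ket0_proj:
  assumes "0 < d"
  shows "mtrace (mat_sum d I (\<lambda>i. c i \<cdot>\<^sub>m ket0_proj d)) = (\<Sum>i\<in>I. c i)"
proof -
  have "mtrace (mat_sum d I (\<lambda>i. c i \<cdot>\<^sub>m ket0_proj d)) = (\<Sum>k<d. if k = 0 then (\<Sum>i\<in>I. c i) else 0)"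
    unfolding mtrace_def by (intro sum.cong) (auto simp: ket0_proj_def)
  then show ?thesis
    using assms by simp
qed

lemma instrument_measure_prepare:
  assumes F: "povm dN I F" and dM: "0 < dM"
  shows "instrument dN dM I (\<lambda>i. measure_prepare (F i) dM)"
  unfolding instrument_def
proof (intro conjI ballI)
  show "finite I"
    using F by (simp add: povm_def)
  show "cp_map dN dM (measure_prepare (F i) dM)" if "i \<in> I" for i
    using F that dM by (intro cp_map_measure_prepare) (simp add: povm_def)
next
  fix \<rho> :: "complex mat"
  assume \<rho>: "\<rho> \<in> carrier_mat dN dN"
  have Fi: "F i \<in> carrier_mat dN dN" if "i \<in> I" for i
    using F that by (simp add: povm_def psd_def)
  have "mtrace (mat_sum dM I (\<lambda>i. measure_prepare (F i) dM \<rho>)) = (\<Sum>i\<in>I. mtrace (\<rho> * F i))"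
    unfolding measure_prepare_def using dM by (rule mtrace_mat_sum_ket0_proj)
  also have "\<dots> = mtrace (\<rho> * mat_sum dN I F)"
    using \<rho> Fi by (simp add: mtrace_mult_mat_sum)
  also have "\<dots> = mtrace \<rho>"
    using F \<rho> by (simp add: povm_def)
  finally show "mtrace (mat_sum dM I (\<lambda>i. measure_prepare (F i) dM \<rho>)) = mtrace \<rho>" .
qed

lemma dual_map_dim [simp]:
  "dim_row (dual_map d E A) = d" "dim_col (dual_map d E A) = d"
  by (simp_all add: dual_map_def)

lemma mat_sum_dual_measure_prepare:
  assumes K: "povm dM A K" and F: "F \<in> carrier_mat dN dN" and dM: "0 < dM"
  shows "mat_sum dN A (\<lambda>a. c \<cdot>\<^sub>m dual_map dN (measure_prepare F dM) (K a)) = c \<cdot>\<^sub>m F"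
proof -
  have "mat_sum dM A K $$ (0, 0) = 1\<^sub>m dM $$ (0, 0)"
    using K by (simp add: povm_def)
  then have K_sum: "(\<Sum>a\<in>A. K a $$ (0, 0)) = 1"
    using dM by simp
  have "(\<Sum>a\<in>A. c * (K a $$ (0, 0) * f)) = c * f * (\<Sum>a\<in>A. K a $$ (0, 0))" for f
    by (simp add: sum_distrib_left mult_ac)
  then have "mat_sum dN A (\<lambda>a. c \<cdot>\<^sub>m (K a $$ (0, 0) \<cdot>\<^sub>m F)) = c \<cdot>\<^sub>m F"
    using F K_sum by (auto intro!: eq_matI)
  moreover have "K a \<in> carrier_mat dM dM" if "a \<in> A" for a
    using K that by (simp add: povm_def psd_def)
  ultimately show ?thesis
    using F dM by (simp add: dual_map_measure_prepare cong: mat_sum_cong)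
qed

lemma mat_sum_dual_measure_prepare_program:
  assumes "finite X" "x0 \<in> X" "povm dM A (\<lambda>a. M a x0)" "F \<in> carrier_mat dN dN" "0 < dM"
  shows "mat_sum dN X (\<lambda>x. mat_sum dN A (\<lambda>a. complex_of_real (c * (if x = x0 then 1 else 0))
      \<cdot>\<^sub>m dual_map dN (measure_prepare F dM) (M a x))) = complex_of_real c \<cdot>\<^sub>m F"
proof -
  have "mat_sum dN A (\<lambda>a. complex_of_real (c * (if x = x0 then 1 else 0))
      \<cdot>\<^sub>m dual_map dN (measure_prepare F dM) (M a x))
      = (if x = x0 then complex_of_real c \<cdot>\<^sub>m F else 0\<^sub>m dN dN)" for x
    using assms by (auto simp: mat_sum_dual_measure_prepare intro!: eq_matI)
  then show ?thesis
    using assms by (simp add: mat_sum_delta)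
qed

lemma simulates_simple_pmd:
  fixes A :: "'a set" and X :: "'x set" and M :: "'a \<Rightarrow> 'x \<Rightarrow> complex mat"
    and B :: "'b set" and Y :: "'y set" and N :: "'b \<Rightarrow> 'y \<Rightarrow> complex mat"
  assumes dM: "0 < dM" and M: "pmd dM A X M" and N: "simple_pmd dN B Y N"
  shows "simulates dM A X M dN B Y N"
proof -
  obtain I :: "nat set" and F p where F: "povm dN I F"
    and p: "\<forall>i\<in>I. \<forall>y\<in>Y. is_distr B (\<lambda>b. p b i y)"
    and N_eq: "\<forall>b\<in>B. \<forall>y\<in>Y. N b y = mat_sum dN I (\<lambda>i. complex_of_real (p b i y) \<cdot>\<^sub>m F i)"
    using N unfolding simple_pmd_def by blast
  obtain x0 where x0: "x0 \<in> X"
    using M by (auto simp: pmd_def)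
  have X: "finite X" and M0: "povm dM A (\<lambda>a. M a x0)"
    using M x0 by (simp_all add: pmd_def)
  have F_carrier: "F i \<in> carrier_mat dN dN" if "i \<in> I" for i
    using F that by (simp add: povm_def psd_def)
  define E :: "nat \<Rightarrow> nat \<Rightarrow> complex mat \<Rightarrow> complex mat" where "E r i = measure_prepare (F i) dM" for r i
  define px :: "'x \<Rightarrow> nat \<Rightarrow> 'y \<Rightarrow> nat \<Rightarrow> real" where "px x i y r = (if x = x0 then 1 else 0)" for x i y r
  define q :: "'b \<Rightarrow> 'a \<Rightarrow> 'x \<Rightarrow> nat \<Rightarrow> 'y \<Rightarrow> nat \<Rightarrow> real" where "q b a x i y r = p b i y" for b a x i y r
  have N_sim: "N b y = mat_sum dN {0} (\<lambda>r. complex_of_real 1 \<cdot>\<^sub>m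
      mat_sum dN I (\<lambda>i. mat_sum dN X (\<lambda>x. mat_sum dN A (\<lambda>a.
        complex_of_real (q b a x i y r * px x i y r) \<cdot>\<^sub>m dual_map dN (E r i) (M a x)))))"
    if "b \<in> B" "y \<in> Y" for b y
  proof -
    have "N b y = mat_sum dN I (\<lambda>i. complex_of_real (p b i y) \<cdot>\<^sub>m F i)"
      using N_eq that by simp
    also have "\<dots> = mat_sum dN I (\<lambda>i. mat_sum dN X (\<lambda>x. mat_sum dN A (\<lambda>a.
        complex_of_real (q b a x i y 0 * px x i y 0) \<cdot>\<^sub>m dual_map dN (E 0 i) (M a x))))"
      unfolding q_def px_def E_def
      using X x0 M0 F_carrier dM by (intro mat_sum_cong) (simp only: mat_sum_dual_measure_prepare_program)
    also have "\<dots> = mat_sum dN {0} (\<lambda>r. complex_of_real 1 \<cdot>\<^sub>m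
        mat_sum dN I (\<lambda>i. mat_sum dN X (\<lambda>x. mat_sum dN A (\<lambda>a.
          complex_of_real (q b a x i y r * px x i y r) \<cdot>\<^sub>m dual_map dN (E r i) (M a x)))))"
      by (subst mat_sum_singleton) (auto intro!: eq_matI)
    finally show ?thesis .
  qed
  show ?thesis
    unfolding simulates_def
  proof (intro exI conjI ballI)
    show "is_distr {0} (\<lambda>_. 1)"
      by (simp add: is_distr_def)
    show "instrument dN dM I (E r)" for r
      unfolding E_def using F dM by (rule instrument_measure_prepare)
    show "is_distr X (\<lambda>x. px x i y r)" for i y r
      using X x0 by (simp add: is_distr_def px_def)
    show "is_distr B (\<lambda>b. q b a x i y r)" if "i \<in> I" "y \<in> Y" for a x i y r
      using p that by (simp add: q_def)
  qed (fact N_sim)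
qed

theorem lemma1:
  fixes dQ dQ' :: nat
    and A :: "'a set" and X :: "'x set" and M :: "'a \<Rightarrow> 'x \<Rightarrow> complex mat"
    and B :: "'b set" and Y :: "'y set" and N :: "'b \<Rightarrow> 'y \<Rightarrow> complex mat"
  assumes "1 \<le> dQ" and "1 \<le> dQ'"
    and "pmd dQ A X M" and "simple_pmd dQ A X M"
    and "pmd dQ' B Y N" and "simple_pmd dQ' B Y N"
  shows "simulates dQ A X M dQ' B Y N \<and> simulates dQ' B Y N dQ A X M"
  using simulates_simple_pmd[OF _ assms(3,6)] simulates_simple_pmd[OF _ assms(5,4)] assms(1,2)
  by simp

end
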